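(* Let $f_0(2)=f_0(3)=1$ and $f_0(n)=0$ for all other $n\ge1$, and let $m\ge1$. For $n>3$ and $1\le k\le n$, $c_m(n,k)$ equals the number of words of length $n-1$ over the alphabet $\{0,1,\ldots,m\}$ with exactly $k-1$ letters equal to $1$, which begin with $0$ and end with $0$, which contain no run of more than $2$ consecutive zeros, and in which all nonzero letters are isolated (no two nonzero letters are adjacent).
   Context: For $m\ge 1$, $f_m$ is the invert transform of $f_{m-1}$, i.e. $f_m(n)=f_{m-1}(n)+\sum_{i=1}^{n-1}f_{m-1}(i)f_m(n-i)$ for $n\ge1$. For $m\ge1$ the numbers $c_m(n,k)$, $0\le k\le n$, are defined by $c_m(0,0)=1$, $c_m(n,0)=0$ for $n\ge1$, and $c_m(n,k)=\sum_{i=1}^{n-k+1}f_{m-1}(i)\,c_m(n-i,k-1)$ for $1\le k\le n$. *)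

theory Defs
  imports Main
begin

text \<open>For m >= 1, f_m is the invert transform of f_{m-1}:
  f_m(n) = f_{m-1}(n) + sum_{i=1}^{n-1} f_{m-1}(i) f_m(n-i) for n >= 1.
  The value at n = 0 is irrelevant and set to 0.\<close>

function ff :: "nat \<Rightarrow> nat \<Rightarrow> nat" where
  "ff 0 n = (if n = 2 \<or> n = 3 then 1 else 0)"
| "ff (Suc m) n =
     (if n = 0 then 0
      else ff m n + (\<Sum>i\<in>{1..n-1}. ff m i * ff (Suc m) (n - i)))"
  by pat_completeness auto
termination
  by (relation "measures [fst, snd]") auto

text \<open>Values with k > n are not used by the paper and are set to 0.\<close>

fun cc :: "nat \<Rightarrow> nat \<Rightarrow> nat \<Rightarrow> nat" where
  "cc m n 0 = (if n = 0 then 1 else 0)"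
| "cc m n (Suc k) =
     (if Suc k \<le> n
      then (\<Sum>i\<in>{1..n - Suc k + 1}. ff (m - 1) i * cc m (n - i) k)
      else 0)"

definition good_words :: "nat \<Rightarrow> nat \<Rightarrow> nat \<Rightarrow> nat list set" where
  "good_words m n k = {w.
      length w = n - 1 \<and>
      set w \<subseteq> {0..m} \<and>
      length (filter (\<lambda>x. x = 1) w) = k - 1 \<and>
      w \<noteq> [] \<and> hd w = 0 \<and> last w = 0 \<and>
      (\<forall>i. i + 2 < length w \<longrightarrow> \<not> (w ! i = 0 \<and> w ! (i+1) = 0 \<and> w ! (i+2) = 0)) \<and>
      (\<forall>i. i + 1 < length w \<longrightarrow> w ! i = 0 \<or> w ! (i+1) = 0)}"

end

theory Submission
  imports Defs "HOL-Computational_Algebra.Formal_Power_Series"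
begin

text \<open>
  A good word consists of a run of one or two zeros followed by blocks "nonzero letter, then one
  or two zeros". Splitting off the first run shows that the generating function H_j(x) of good
  words with j ones, counted by length + 1, satisfies H_j = F_0 H_{j-1} + (m - 1) F_0 H_j with
  H_{-1} = 1 and F_0 = x^2 + x^3; hence H_j = (F_0 / (1 - (m - 1) F_0))^(j+1). The invert
  transform reads F_m = F_{m-1} / (1 - F_{m-1}), so F_{m-1} = F_0 / (1 - (m - 1) F_0) as well,
  and the recursion for c_m(n, k) says that it is the n-th coefficient of F_{m-1}^k.
\<close>

subsection \<open>Good words as block words\<close>

fun no_three_zeros :: "nat list \<Rightarrow> bool" where
  "no_three_zeros (a # b # c # w) = (\<not> (a = 0 \<and> b = 0 \<and> c = 0) \<and> no_three_zeros (b # c # w))"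
| "no_three_zeros _ = True"

fun nonzeros_isolated :: "nat list \<Rightarrow> bool" where
  "nonzeros_isolated (a # b # w) = ((a = 0 \<or> b = 0) \<and> nonzeros_isolated (b # w))"
| "nonzeros_isolated _ = True"

lemma all_nat_split: "(\<forall>i::nat. Q i) \<longleftrightarrow> Q 0 \<and> (\<forall>i. Q (Suc i))"
  by (metis not0_implies_Suc)

lemma no_three_zeros_iff_nth:
  "(\<forall>i. i + 2 < length w \<longrightarrow> \<not> (w ! i = 0 \<and> w ! (i + 1) = 0 \<and> w ! (i + 2) = 0))
     \<longleftrightarrow> no_three_zeros w"
  by (induction w rule: no_three_zeros.induct) (subst all_nat_split, simp_all)

lemma nonzeros_isolated_iff_nth:
  "(\<forall>i. i + 1 < length w \<longrightarrow> w ! i = 0 \<or> w ! (i + 1) = 0) \<longleftrightarrow> nonzeros_isolated w"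
  by (induction w rule: nonzeros_isolated.induct) (subst all_nat_split, simp_all)

lemma no_three_zeros_Cons_nonzero: "c \<noteq> 0 \<Longrightarrow> no_three_zeros (c # w) = no_three_zeros w"
  by (cases w rule: no_three_zeros.cases) auto

lemma nonzeros_isolated_Cons_zero: "nonzeros_isolated (0 # w) = nonzeros_isolated w"
  by (cases w) auto

inductive block_word :: "nat list \<Rightarrow> bool" where
  "block_word [0]"
| "block_word [0, 0]"
| "c \<noteq> 0 \<Longrightarrow> block_word w \<Longrightarrow> block_word (0 # c # w)"
| "c \<noteq> 0 \<Longrightarrow> block_word w \<Longrightarrow> block_word (0 # 0 # c # w)"

definition zero_bounded_word :: "nat list \<Rightarrow> bool" where
  "zero_bounded_word w \<longleftrightarrow>
     w \<noteq> [] \<and> hd w = 0 \<and> last w = 0 \<and> no_three_zeros w \<and> nonzeros_isolated w"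

lemma block_word_imp_zero_bounded: "block_word w \<Longrightarrow> zero_bounded_word w"
  by (induction rule: block_word.induct)
     (auto simp: zero_bounded_word_def no_three_zeros_Cons_nonzero nonzeros_isolated_Cons_zero
        neq_Nil_conv)

lemma zero_bounded_imp_block_word: "zero_bounded_word w \<Longrightarrow> block_word w"
proof (induction "length w" arbitrary: w rule: less_induct)
  case less
  have zero_bounded_tail: "zero_bounded_word v"
    if "w = p @ c # v" "p \<in> {[0], [0, 0]}" "c \<noteq> 0" for p c v
    using less.prems that
    by (cases v) (auto simp: zero_bounded_word_def no_three_zeros_Cons_nonzero
        nonzeros_isolated_Cons_zero)
  from less.prems obtain r where w: "w = 0 # r"
    unfolding zero_bounded_word_def by (cases w) auto
  consider "r = []" | c v where "r = c # v" "c \<noteq> 0" | "r = [0]"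
    | c v where "r = 0 # c # v" "c \<noteq> 0"
    using less.prems w by (cases r rule: no_three_zeros.cases) (auto simp: zero_bounded_word_def)
  then show ?case
  proof cases
    case (2 c v)
    then have "block_word v"
      using less.hyps zero_bounded_tail[of "[0]" c v] w by simp
    with 2 w show ?thesis by (simp add: block_word.intros)
  next
    case (4 c v)
    then have "block_word v"
      using less.hyps zero_bounded_tail[of "[0, 0]" c v] w by simp
    with 4 w show ?thesis by (simp add: block_word.intros)
  qed (use w block_word.intros in simp_all)
qed

lemma block_word_replicate: "z \<in> {1, 2} \<Longrightarrow> block_word (replicate z 0)"
  by (auto simp: numeral_2_eq_2 block_word.intros)

lemma block_word_prepend:
  "z \<in> {1, 2} \<Longrightarrow> c \<noteq> 0 \<Longrightarrow> block_word v \<Longrightarrow> block_word (replicate z 0 @ c # v)"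
  by (auto simp: numeral_2_eq_2 block_word.intros)

definition words :: "nat \<Rightarrow> nat \<Rightarrow> nat \<Rightarrow> nat list set" where
  "words m L j = {w. length w = L \<and> set w \<subseteq> {0..m} \<and> count_list w 1 = j \<and> block_word w}"

lemma good_words_eq_words: "good_words m n k = words m (n - 1) (k - 1)"
proof -
  have count: "length (filter (\<lambda>x. x = 1) w) = count_list w 1" for w :: "nat list"
    by (induction w) auto
  have "block_word w \<longleftrightarrow> zero_bounded_word w" for w
    using block_word_imp_zero_bounded zero_bounded_imp_block_word by blast
  then show ?thesis
    unfolding good_words_def words_def no_three_zeros_iff_nth nonzeros_isolated_iff_nth count
      zero_bounded_word_def
    by auto
qed

lemma finite_words: "finite (words m L j)"
  by (rule finite_subset[OF _ finite_lists_length_eq[OF finite_atLeastAtMost, of 0 m L]])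
     (auto simp: words_def)

lemma words_0: "words m 0 j = {}"
  by (auto simp: words_def elim: block_word.cases)

subsection \<open>Counting block words by their first block\<close>

definition first_block :: "nat \<Rightarrow> nat \<Rightarrow> nat \<Rightarrow> nat \<Rightarrow> nat list set" where
  "first_block m z L j =
     (if L = z \<and> j = 0 then {replicate z 0} else {})
   \<union> (if 1 \<le> j then (\<lambda>v. replicate z 0 @ 1 # v) ` words m (L - Suc z) (j - 1) else {})
   \<union> (\<lambda>(c, v). replicate z 0 @ c # v) ` ({2..m} \<times> words m (L - Suc z) j)"

lemma words_eq_first_blocks:
  assumes "m \<ge> 1"
  shows "words m L j = first_block m 1 L j \<union> first_block m 2 L j"
proof
  show "words m L j \<subseteq> first_block m 1 L j \<union> first_block m 2 L j"
  proof
    fix w assume w: "w \<in> words m L j"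
    have first_letter: "w \<in> first_block m z L j"
      if "w = replicate z 0 @ c # v" "c \<noteq> 0" "block_word v" for z c v
    proof (cases "c = 1")
      case True
      then show ?thesis using w that by (auto simp: first_block_def words_def)
    next
      case False
      then have "(c, v) \<in> {2..m} \<times> words m (L - Suc z) j"
        using w that by (auto simp: words_def)
      then show ?thesis
        unfolding first_block_def using that
        by (intro UnI2 image_eqI[where x = "(c, v)"]) simp_all
    qed
    from w have "block_word w" by (simp add: words_def)
    then show "w \<in> first_block m 1 L j \<union> first_block m 2 L j"
    proof cases
      case (3 c v)
      then show ?thesis using first_letter[of 1 c v] by simp
    next
      case (4 c v)
      then show ?thesis using first_letter[of 2 c v] by (simp add: numeral_2_eq_2)
    qed (use w in \<open>auto simp: words_def first_block_def numeral_2_eq_2\<close>)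
  qed
next
  have "first_block m z L j \<subseteq> words m L j" if z: "z \<in> {1, 2}" for z
  proof -
    have prepend: "replicate z 0 @ c # v \<in> words m L j"
      if "c \<in> {1..m}" "v \<in> words m (L - Suc z) i" "of_bool (c = 1) + i = j" for c v i
    proof -
      have "L - Suc z \<noteq> 0"
        using that(2) words_0 by (metis empty_iff)
      with that z show ?thesis
        by (auto simp: words_def block_word_prepend)
    qed
    have "replicate z 0 \<in> words m z 0"
      using z by (auto simp: words_def block_word_replicate)
    with assms show ?thesis
      unfolding first_block_def by (auto simp: words_0 intro!: prepend)
  qed
  then show "first_block m 1 L j \<union> first_block m 2 L j \<subseteq> words m L j"
    by blast
qed

lemma first_blocks_disjoint: "first_block m 1 L j \<inter> first_block m 2 L j = {}"
proof -
  have "w ! 1 \<noteq> 0 \<or> w = [0]" if "w \<in> first_block m 1 L j" for w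
    using that by (auto simp: first_block_def split: if_splits)
  moreover have "w ! 1 = 0 \<and> w \<noteq> [0]" if "w \<in> first_block m 2 L j" for w
    using that by (auto simp: first_block_def numeral_2_eq_2 split: if_splits)
  ultimately show ?thesis
    by blast
qed

lemma card_first_block:
  "card (first_block m z L j) =
     of_bool (L = z \<and> j = 0)
   + (if 1 \<le> j then card (words m (L - Suc z) (j - 1)) else 0)
   + (m - 1) * card (words m (L - Suc z) j)"
proof -
  let ?single = "if L = z \<and> j = 0 then {replicate z 0} else {}"
  let ?one = "if 1 \<le> j then (\<lambda>v. replicate z 0 @ 1 # v) ` words m (L - Suc z) (j - 1) else {}"
  let ?big = "(\<lambda>(c, v). replicate z 0 @ c # v) ` ({2..m} \<times> words m (L - Suc z) j)"
  have "card ?one = (if 1 \<le> j then card (words m (L - Suc z) (j - 1)) else 0)"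
    by (simp add: card_image inj_on_def)
  moreover have "card ?big = (m - 1) * card (words m (L - Suc z) j)"
    by (subst card_image) (auto simp: inj_on_def card_cartesian_product)
  moreover have "?single \<inter> ?one = {}" "(?single \<union> ?one) \<inter> ?big = {}"
    by auto
  ultimately show ?thesis
    unfolding first_block_def by (simp add: card_Un_disjoint finite_words)
qed

lemma card_words_rec:
  assumes "m \<ge> 1"
  shows "card (words m L j) =
     of_bool (L = 1 \<and> j = 0) + of_bool (L = 2 \<and> j = 0)
   + (if 1 \<le> j then card (words m (L - 2) (j - 1)) + card (words m (L - 3) (j - 1)) else 0)
   + (m - 1) * (card (words m (L - 2) j) + card (words m (L - 3) j))"
proof -
  have "finite (first_block m z L j)" for z
    by (simp add: first_block_def finite_words)
  then have "card (words m L j) = card (first_block m 1 L j) + card (first_block m 2 L j)"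
    using words_eq_first_blocks[OF assms, of L j] first_blocks_disjoint
    by (simp add: card_Un_disjoint)
  then show ?thesis
    by (simp add: card_first_block numeral_2_eq_2 numeral_3_eq_3 algebra_simps)
qed

subsection \<open>Generating functions\<close>

declare ff.simps(2) [simp del] \<comment> \<open>its right-hand side calls \<open>ff (Suc m)\<close> again\<close>

definition fps_f0 :: "int fps" where
  "fps_f0 = fps_X ^ 2 + fps_X ^ 3"

definition fps_ff :: "nat \<Rightarrow> int fps" where
  "fps_ff m = Abs_fps (\<lambda>n. int (ff m n))"

lemma ff_0 [simp]: "ff m 0 = 0"
  by (cases m) (simp_all add: ff.simps)

lemma fps_ff_0: "fps_ff 0 = fps_f0"
  by (rule fps_ext) (simp add: fps_ff_def fps_f0_def)

lemma fps_ff_Suc: "fps_ff (Suc m) = fps_ff m + fps_ff m * fps_ff (Suc m)"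
proof (rule fps_ext)
  fix n
  show "fps_nth (fps_ff (Suc m)) n = fps_nth (fps_ff m + fps_ff m * fps_ff (Suc m)) n"
  proof (cases "n = 0")
    case False
    have "fps_nth (fps_ff m * fps_ff (Suc m)) n
        = (\<Sum>i = 0..n. int (ff m i) * int (ff (Suc m) (n - i)))"
      by (simp add: fps_mult_nth fps_ff_def)
    also have "\<dots> = (\<Sum>i = 1..n - 1. int (ff m i) * int (ff (Suc m) (n - i)))"
      by (rule sum.mono_neutral_right) (auto simp: not_le)
    finally show ?thesis
      using False by (simp add: fps_ff_def ff.simps(2)[of m n])
  qed (simp add: fps_ff_def)
qed

lemma invert_transform_step:
  fixes A B F c :: "'a::comm_ring_1"
  assumes "A = B + B * A" and "(1 - c * F) * B = F"
  shows "(1 - (c + 1) * F) * A = F"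
proof -
  have "(1 - (c + 1) * F) * A = (1 - c * F) * (B + B * A) - F * A"
    using assms(1) by (simp add: algebra_simps)
  also have "\<dots> = (1 - c * F) * B + ((1 - c * F) * B) * A - F * A"
    by (simp add: algebra_simps)
  finally show ?thesis
    using assms(2) by simp
qed

lemma fps_ff_closed_form: "(1 - of_nat m * fps_f0) * fps_ff m = fps_f0"
proof (induction m)
  case (Suc m)
  then show ?case
    using invert_transform_step[OF fps_ff_Suc Suc.IH] by (simp add: add.commute)
qed (simp add: fps_ff_0)

lemma cc_eq_fps_nth_power: "int (cc m n k) = fps_nth (fps_ff (m - 1) ^ k) n"
proof (induction k arbitrary: n)
  case (Suc k)
  define A where "A = fps_ff (m - 1)"
  have A0: "fps_nth A 0 = 0"
    by (simp add: A_def fps_ff_def)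
  have low: "fps_nth (A ^ k') j = 0" if "j < k'" for j k'
    using startsby_zero_power_prefix[OF A0] that by blast
  show ?case
  proof (cases "Suc k \<le> n")
    case True
    have "int (cc m n (Suc k)) = (\<Sum>i = 1..n - k. fps_nth A i * fps_nth (A ^ k) (n - i))"
      using True by (simp add: Suc.IH A_def fps_ff_def Suc_diff_Suc)
    also have "\<dots> = (\<Sum>i = 0..n. fps_nth A i * fps_nth (A ^ k) (n - i))"
      by (rule sum.mono_neutral_left) (auto simp: A0 low not_le)
    finally show ?thesis
      by (simp add: fps_mult_nth A_def)
  next
    case False
    then show ?thesis
      using low[of n "Suc k"] by (simp add: A_def)
  qed
qed simp

definition fps_words :: "nat \<Rightarrow> nat \<Rightarrow> int fps" where
  "fps_words m j = Abs_fps (\<lambda>N. int (card (words m (N - 1) j)))"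

text \<open>The truncated subtractions are harmless because the constant coefficient of \<open>A\<close> is 0.\<close>

lemma fps_nth_f0_mult_Suc:
  assumes "fps_nth A 0 = 0"
  shows "fps_nth (fps_f0 * A) (Suc L) = fps_nth A (L - 1) + fps_nth A (L - 2)"
  using assms by (simp add: fps_f0_def distrib_right fps_X_power_mult_nth)

lemma fps_words_rec:
  assumes "m \<ge> 1"
  shows "fps_words m j =
    fps_f0 * (if j = 0 then 1 else fps_words m (j - 1)) + of_nat (m - 1) * (fps_f0 * fps_words m j)"
proof (rule fps_ext)
  fix N
  have zero: "fps_nth (fps_words m i) 0 = 0" for i
    by (simp add: fps_words_def words_0)
  show "fps_nth (fps_words m j) N =
    fps_nth (fps_f0 * (if j = 0 then 1 else fps_words m (j - 1))
      + of_nat (m - 1) * (fps_f0 * fps_words m j)) N"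
  proof (cases N)
    case 0
    then show ?thesis by (simp add: fps_f0_def zero)
  next
    case (Suc L)
    have shift: "fps_nth (fps_words m i) (L - d) = int (card (words m (L - Suc d) i))" for i d
      by (cases "L \<le> d") (simp_all add: fps_words_def words_0 Suc_diff_Suc)
    have f0_mult: "fps_nth (fps_f0 * fps_words m i) (Suc L)
        = int (card (words m (L - 2) i)) + int (card (words m (L - 3) i))" for i
      using shift[of i 1] shift[of i 2] by (simp add: fps_nth_f0_mult_Suc zero numeral_2_eq_2 numeral_3_eq_3)
    have f0: "fps_nth fps_f0 (Suc L) = of_bool (L = 1) + of_bool (L = 2)"
      by (simp add: fps_f0_def)
    have "fps_nth (fps_f0 * (if j = 0 then 1 else fps_words m (j - 1))
        + of_nat (m - 1) * (fps_f0 * fps_words m j)) (Suc L)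
      = (if j = 0 then of_bool (L = 1) + of_bool (L = 2)
         else int (card (words m (L - 2) (j - 1))) + int (card (words m (L - 3) (j - 1))))
        + int (m - 1) * (int (card (words m (L - 2) j)) + int (card (words m (L - 3) j)))"
      using f0 f0_mult[of j] f0_mult[of "j - 1"] by (simp add: fps_of_nat[symmetric])
    then show ?thesis
      using card_words_rec[OF assms, of L j] Suc by (simp add: fps_words_def)
  qed
qed

lemma fps_words_eq_power:
  assumes "m \<ge> 1"
  shows "fps_words m j = fps_ff (m - 1) ^ Suc j"
proof -
  define D where "D = 1 - of_nat (m - 1) * fps_f0"
  have "fps_nth D 0 = 1"
    by (simp add: D_def fps_f0_def fps_of_nat[symmetric])
  then have "D \<noteq> 0"
    by auto
  have D_ff: "D * fps_ff (m - 1) = fps_f0"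
    unfolding D_def by (rule fps_ff_closed_form)
  have D_words: "D * fps_words m j = fps_f0 * (if j = 0 then 1 else fps_words m (j - 1))" for j
  proof -
    have "D * fps_words m j = fps_words m j - of_nat (m - 1) * (fps_f0 * fps_words m j)"
      by (simp add: D_def left_diff_distrib mult.assoc)
    then show ?thesis
      using fps_words_rec[OF assms, of j] by (metis add_diff_cancel_right')
  qed
  show ?thesis
  proof (induction j)
    case 0
    have "D * fps_words m 0 = D * fps_ff (m - 1) ^ Suc 0"
      using D_words[of 0] D_ff by simp
    then show ?case
      using \<open>D \<noteq> 0\<close> by simp
  next
    case (Suc j)
    have "D * fps_words m (Suc j) = fps_f0 * fps_words m j"
      using D_words[of "Suc j"] by simp
    also have "\<dots> = (D * fps_ff (m - 1)) * fps_ff (m - 1) ^ Suc j"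
      using D_ff Suc.IH by simp
    also have "\<dots> = D * fps_ff (m - 1) ^ Suc (Suc j)"
      by (simp only: mult.assoc power_Suc)
    finally have "D * fps_words m (Suc j) = D * fps_ff (m - 1) ^ Suc (Suc j)" .
    then show ?case
      using \<open>D \<noteq> 0\<close> by simp
  qed
qed

theorem corollary31:
  fixes m n k :: nat
  assumes "m \<ge> 1" and "n > 3" and "1 \<le> k" and "k \<le> n"
  shows "cc m n k = card (good_words m n k)"
proof -
  have "int (card (good_words m n k)) = fps_nth (fps_words m (k - 1)) n"
    by (simp add: good_words_eq_words fps_words_def)
  also have "\<dots> = fps_nth (fps_ff (m - 1) ^ k) n"
    using assms(1,3) by (simp add: fps_words_eq_power)
  also have "\<dots> = int (cc m n k)"
    by (simp add: cc_eq_fps_nth_power)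
  finally show ?thesis
    by simp
qed

end
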